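(* Let $M$ be a preordered commutative monoid (written multiplicatively, with unit $1$) such that $x\ge 1$ for all $x\in M$, and let $g\in M$ be a generator. For $x,y\in M$ and $r\in\mathbb{R}_{\ge 0}$ the following are equivalent: (1) $r$ is a regularized rate from $x$ to $y$; (2) for every $\delta>0$ there exists $n\in\mathbb{N}$, $n\ge 1$, such that $x^n g^{\lfloor\delta n\rfloor}\ge y^{\lceil rn\rceil}$.
   Context: A preordered commutative monoid is a set $M$ with an associative, commutative binary operation with neutral element $1$, and a reflexive transitive relation $\le$ such that $x\ge y$ implies $xz\ge yz$ for all $x,y,z$. An element $g\in M$ is a generator if for every $x\in M$ there is $n\in\mathbb{N}$ with $g^n\ge x$. Given a generator $g$, a number $r\in\mathbb{R}_{\ge0}$ is a regularized rate from $x$ to $y$ if for every $\delta>0$ and every neighbourhood $U$ of $r$ there are $m,n\in\mathbb{N}$ with $\frac{m}{n}\in U$ and $d\in\mathbb{N}$ with $d\le\delta\max(m,n)$ such that $x^n g^d\ge y^m$. *)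

theory Defs
  imports Complex_Main
begin

text \<open>The preordered commutative monoid is a type of class comm_monoid_mult
  (multiplication, unit 1) together with class preorder (reflexive transitive \<le>);
  compatibility of the order with multiplication is an explicit hypothesis.\<close>

definition is_generator :: "'a::{comm_monoid_mult, preorder} \<Rightarrow> bool" where
  "is_generator g \<longleftrightarrow> (\<forall>x. \<exists>n::nat. g ^ n \<ge> x)"

definition is_regularized_rate ::
  "'a::{comm_monoid_mult, preorder} \<Rightarrow> 'a \<Rightarrow> 'a \<Rightarrow> real \<Rightarrow> bool" where
  "is_regularized_rate g x y r \<longleftrightarrow>
     (\<forall>\<delta>>0. \<forall>U::real set. open U \<and> r \<in> U \<longrightarrow>
        (\<exists>m n d::nat. n > 0 \<and> real m / real n \<in> U \<and>
            real d \<le> \<delta> * real (max m n) \<and> x ^ n * g ^ d \<ge> y ^ m))"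

end

theory Submission
  imports Defs "HOL-Analysis.Analysis"
begin

text \<open>Both directions rest on raising an inequality \<open>x\<^sup>n g\<^sup>d \<ge> y\<^sup>m\<close> to a
  \<open>k\<close>-th power, which replaces \<open>(m, n, d)\<close> by \<open>(k m, k n, k d)\<close> without changing
  \<open>m / n\<close> or \<open>d / n\<close>; since every element is \<open>\<ge> 1\<close>, exponents may moreover be
  increased on the larger side and decreased on the smaller one.
  For (2) \<open>\<Longrightarrow>\<close> (1), scaling a witness for \<open>\<delta>\<close> by a large \<open>k\<close> makes
  \<open>\<lceil>r k n\<rceil> / (k n)\<close> lie within \<open>1 / (k n)\<close> of \<open>r\<close>.
  For (1) \<open>\<Longrightarrow>\<close> (2), a witness \<open>(m, n, d)\<close> with \<open>m / n\<close> within \<open>\<epsilon>\<close> of \<open>r\<close>,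
  scaled by \<open>k\<close>, falls short of the exponent \<open>\<lceil>r k n\<rceil>\<close> by at most \<open>\<lceil>\<epsilon> k n\<rceil>\<close>
  copies of \<open>y\<close>; these are paid for with \<open>g\<^sup>c \<ge> y\<close>, which uses only a small
  part of the budget \<open>\<delta> k n\<close> when \<open>\<epsilon>\<close> is small and \<open>k\<close> is large.\<close>

lemma nat_ceiling_mult_le:
  "nat \<lceil>r * real (k * n)\<rceil> \<le> k * nat \<lceil>r * real n\<rceil>"
proof (cases "r \<ge> 0")
  case True
  have "r * real n * real k \<le> of_int \<lceil>r * real n\<rceil> * real k"
    by (intro mult_right_mono) auto
  then have "\<lceil>r * real (k * n)\<rceil> \<le> int k * \<lceil>r * real n\<rceil>"
    by (simp add: ceiling_le_iff algebra_simps)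
  then have "nat \<lceil>r * real (k * n)\<rceil> \<le> nat (int k * \<lceil>r * real n\<rceil>)"
    by (rule nat_mono)
  then show ?thesis by (simp add: nat_mult_distrib)
next
  case False
  then have "r * real (k * n) \<le> 0" by (simp add: mult_nonpos_nonneg)
  then show ?thesis by simp
qed

lemma tendsto_nat_ceiling_div:
  assumes "r \<ge> 0"
  shows "(\<lambda>N. real (nat \<lceil>r * real N\<rceil>) / real N) \<longlonglongrightarrow> r"
proof (rule tendsto_sandwich[of "\<lambda>_. r" _ _ "\<lambda>N. r + 1 / real N"])
  have lower: "r * real N \<le> real (nat \<lceil>r * real N\<rceil>)"
    and upper: "real (nat \<lceil>r * real N\<rceil>) \<le> r * real N + 1" for N :: nat
    using assms by (simp_all add: real_nat_ceiling_ge of_nat_nat)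
  show "eventually (\<lambda>N. r \<le> real (nat \<lceil>r * real N\<rceil>) / real N) sequentially"
    using eventually_gt_at_top[of 0]
    by (rule eventually_mono) (use lower in \<open>simp add: field_simps\<close>)
  show "eventually (\<lambda>N. real (nat \<lceil>r * real N\<rceil>) / real N \<le> r + 1 / real N) sequentially"
    using eventually_gt_at_top[of 0]
    by (rule eventually_mono) (use upper in \<open>simp add: field_simps\<close>)
  show "(\<lambda>N. r + 1 / real N) \<longlonglongrightarrow> r"
    using tendsto_add[OF tendsto_const lim_const_over_n[of 1]] by simp
qed simp

lemma nat_ceiling_scaled_le:
  assumes "(r - \<epsilon>) * real n < real m" "k > 0"
  shows "nat \<lceil>r * real (k * n)\<rceil> \<le> k * m + nat \<lceil>\<epsilon> * real (k * n)\<rceil>"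
proof -
  have "real k * ((r - \<epsilon>) * real n) < real k * real m"
    using assms by (intro mult_strict_left_mono) auto
  then have "r * real (k * n) < real k * real m + \<epsilon> * real (k * n)"
    by (simp add: algebra_simps)
  also have "\<epsilon> * real (k * n) \<le> real (nat \<lceil>\<epsilon> * real (k * n)\<rceil>)"
    by (rule real_nat_ceiling_ge)
  finally have "r * real (k * n) < real (k * m + nat \<lceil>\<epsilon> * real (k * n)\<rceil>)"
    by (simp only: of_nat_add of_nat_mult)
  then have "\<lceil>r * real (k * n)\<rceil> \<le> int (k * m + nat \<lceil>\<epsilon> * real (k * n)\<rceil>)"
    by (metis ceiling_le less_imp_le of_int_of_nat_eq)
  then show ?thesis by (simp only: nat_le_iff)
qed

lemma scaled_budget_le:
  assumes "real d \<le> \<eta> * real n" "real c * \<epsilon> \<le> \<eta>" "real c \<le> \<eta> * real k"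
    and "\<epsilon> > 0" "n > 0"
  shows "real (k * d + c * nat \<lceil>\<epsilon> * real (k * n)\<rceil>) \<le> 3 * \<eta> * real (k * n)"
proof -
  have "0 \<le> real c * \<epsilon>" using assms(4) by simp
  with assms(2) have "\<eta> \<ge> 0" by linarith
  have "real k * real d \<le> real k * (\<eta> * real n)" using assms(1) by (intro mult_left_mono) auto
  then have "real (k * d) \<le> \<eta> * real (k * n)" by (simp add: mult.left_commute)
  moreover have "real (c * nat \<lceil>\<epsilon> * real (k * n)\<rceil>) \<le> 2 * \<eta> * real (k * n)"
  proof -
    have "real (nat \<lceil>\<epsilon> * real (k * n)\<rceil>) \<le> \<epsilon> * real (k * n) + 1" using assms(4) by simp
    then have "real (c * nat \<lceil>\<epsilon> * real (k * n)\<rceil>) \<le> real c * (\<epsilon> * real (k * n) + 1)"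
      by (simp add: mult_left_mono)
    also have "\<dots> = real c * \<epsilon> * real (k * n) + real c" by (simp add: algebra_simps)
    also have "\<dots> \<le> \<eta> * real (k * n) + \<eta> * real k"
      using assms(2,3) by (intro add_mono mult_right_mono) auto
    also have "\<eta> * real k \<le> \<eta> * real (k * n)"
      using \<open>\<eta> \<ge> 0\<close> \<open>n > 0\<close> by (intro mult_left_mono of_nat_mono) auto
    finally show ?thesis by simp
  qed
  ultimately show ?thesis by simp
qed

lemma regularized_rate_witness:
  fixes g x y :: "'a::{comm_monoid_mult, preorder}"
  assumes rate: "is_regularized_rate g x y r"
    and "r \<ge> 0" "\<delta> > 0" "\<epsilon> > 0" "\<epsilon> \<le> 1"
  obtains m n d :: nat where "n > 0" "(r - \<epsilon>) * real n < real m"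
    "real d \<le> \<delta> * real n" "x ^ n * g ^ d \<ge> y ^ m"
proof -
  have "\<delta> / (r + 1) > 0" using assms by simp
  then obtain m n d :: nat where "n > 0" and close: "dist (real m / real n) r < \<epsilon>"
    and d_le_max: "real d \<le> \<delta> / (r + 1) * real (max m n)"
    and witness: "x ^ n * g ^ d \<ge> y ^ m"
    using rate \<open>\<epsilon> > 0\<close> unfolding is_regularized_rate_def
    by (metis centre_in_ball open_ball mem_ball dist_commute)
  have m_bounds: "(r - \<epsilon>) * real n < real m" "real m < (r + \<epsilon>) * real n"
    using close \<open>n > 0\<close> by (auto simp: dist_real_def abs_less_iff field_simps)
  have "(r + \<epsilon>) * real n \<le> (r + 1) * real n"
    using \<open>\<epsilon> \<le> 1\<close> by (intro mult_right_mono) auto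
  then have "real (max m n) \<le> (r + 1) * real n"
    using m_bounds(2) \<open>r \<ge> 0\<close> by (auto simp: of_nat_max algebra_simps)
  then have "real d \<le> \<delta> / (r + 1) * ((r + 1) * real n)"
    using d_le_max \<open>\<delta> / (r + 1) > 0\<close> by (meson mult_left_mono less_imp_le order_trans)
  also have "\<dots> = \<delta> * real n" using \<open>r \<ge> 0\<close> by (simp add: field_simps)
  finally show ?thesis using that \<open>n > 0\<close> m_bounds(1) witness by blast
qed

locale one_le_preordered_monoid =
  assumes mult_right_mono_pre:
      "\<And>a b c :: 'a::{comm_monoid_mult, preorder}. a \<ge> b \<Longrightarrow> a * c \<ge> b * c"
    and one_le: "\<And>a :: 'a. 1 \<le> a"
begin

lemma mult_mono_pre:
  fixes a b c d :: 'a
  assumes "a \<ge> b" "c \<ge> d"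
  shows "a * c \<ge> b * d"
proof -
  have "a * c \<ge> b * c" using mult_right_mono_pre \<open>a \<ge> b\<close> .
  moreover have "c * b \<ge> d * b" using mult_right_mono_pre \<open>c \<ge> d\<close> .
  ultimately show ?thesis by (metis mult.commute order_trans)
qed

lemma power_mono_pre:
  fixes a b :: 'a
  assumes "a \<ge> b"
  shows "a ^ n \<ge> b ^ n"
  by (induction n) (auto intro: mult_mono_pre assms)

lemma power_increasing_pre:
  fixes a :: 'a
  assumes "m \<le> n"
  shows "a ^ m \<le> a ^ n"
proof -
  have "a ^ n = a ^ (n - m) * a ^ m" using assms by (simp flip: power_add)
  moreover have "a ^ (n - m) * a ^ m \<ge> 1 * a ^ m" using mult_right_mono_pre one_le .
  ultimately show ?thesis by simp
qed

lemma power_le_power_scale: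
  fixes g x y :: 'a
  assumes "x ^ n * g ^ d \<ge> y ^ m"
  shows "x ^ (k * n) * g ^ (k * d) \<ge> y ^ (k * m)"
proof -
  have "(x ^ n * g ^ d) ^ k \<ge> (y ^ m) ^ k" using power_mono_pre[OF assms] .
  then show ?thesis by (simp add: power_mult_distrib mult.commute flip: power_mult)
qed

lemma power_le_power_scale_repair:
  fixes g x y :: 'a
  assumes "g ^ c \<ge> y" "x ^ n * g ^ d \<ge> y ^ m"
    and "p \<le> k * m + e" "k * d + c * e \<le> q"
  shows "x ^ (k * n) * g ^ q \<ge> y ^ p"
proof -
  have "y ^ p \<le> y ^ (k * m) * y ^ e"
    using power_increasing_pre[OF assms(3)] by (simp add: power_add)
  also have "\<dots> \<le> x ^ (k * n) * g ^ (k * d) * (g ^ c) ^ e"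
    using power_le_power_scale[OF assms(2)] power_mono_pre[OF assms(1)] by (rule mult_mono_pre)
  also have "\<dots> = x ^ (k * n) * g ^ (k * d + c * e)"
    by (simp add: power_add power_mult mult.assoc)
  also have "\<dots> \<le> x ^ (k * n) * g ^ q"
    by (intro mult_mono_pre order_refl power_increasing_pre[OF assms(4)])
  finally show ?thesis .
qed

lemma regularized_rate_imp_ceiling_floor:
  fixes g x y :: 'a and r \<delta> :: real
  assumes gen: "is_generator g"
    and r_nonneg: "r \<ge> 0"
    and rate: "is_regularized_rate g x y r"
    and "\<delta> > 0"
  shows "\<exists>N::nat. N \<ge> 1 \<and> x ^ N * g ^ nat \<lfloor>\<delta> * real N\<rfloor> \<ge> y ^ nat \<lceil>r * real N\<rceil>"
proof -
  obtain c where c: "g ^ c \<ge> y" using gen unfolding is_generator_def by blast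
  define \<epsilon> where "\<epsilon> = min 1 (\<delta> / (3 * (real c + 1)))"
  have "\<epsilon> > 0" "\<epsilon> \<le> 1" using \<open>\<delta> > 0\<close> by (auto simp: \<epsilon>_def)
  have c_\<epsilon>: "real c * \<epsilon> \<le> \<delta> / 3"
  proof -
    have "real c * \<epsilon> \<le> (real c + 1) * (\<delta> / (3 * (real c + 1)))"
      using \<open>\<epsilon> > 0\<close> by (intro mult_mono) (auto simp: \<epsilon>_def)
    also have "\<dots> = \<delta> / 3" by (simp add: field_simps add_pos_nonneg)
    finally show ?thesis .
  qed
  have "\<delta> / 3 > 0" using \<open>\<delta> > 0\<close> by simp
  obtain m n d :: nat where "n > 0" and m_lower: "(r - \<epsilon>) * real n < real m"
    and d_le: "real d \<le> \<delta> / 3 * real n" and witness: "x ^ n * g ^ d \<ge> y ^ m"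
    by (rule regularized_rate_witness[OF rate r_nonneg \<open>\<delta> / 3 > 0\<close> \<open>\<epsilon> > 0\<close> \<open>\<epsilon> \<le> 1\<close>])
  obtain k :: nat where "k \<ge> 1" and k: "real c \<le> \<delta> / 3 * real k"
  proof -
    obtain k0 :: nat where "3 * real c / \<delta> \<le> real k0" using real_arch_simple by blast
    then have "real c \<le> \<delta> / 3 * real (k0 + 1)" using \<open>\<delta> > 0\<close> by (simp add: field_simps)
    then show ?thesis using that[of "k0 + 1"] by simp
  qed
  define N where "N = k * n"
  have "N \<ge> 1" using \<open>k \<ge> 1\<close> \<open>n > 0\<close> by (simp add: N_def)
  have "nat \<lceil>r * real N\<rceil> \<le> k * m + nat \<lceil>\<epsilon> * real N\<rceil>"
    using nat_ceiling_scaled_le[OF m_lower] \<open>k \<ge> 1\<close> by (simp add: N_def)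
  moreover have "k * d + c * nat \<lceil>\<epsilon> * real N\<rceil> \<le> nat \<lfloor>\<delta> * real N\<rfloor>"
    using scaled_budget_le[OF d_le c_\<epsilon> k \<open>\<epsilon> > 0\<close> \<open>n > 0\<close>]
    by (intro le_nat_floor) (simp add: N_def)
  ultimately have "x ^ N * g ^ nat \<lfloor>\<delta> * real N\<rfloor> \<ge> y ^ nat \<lceil>r * real N\<rceil>"
    unfolding N_def by (rule power_le_power_scale_repair[OF c witness])
  then show ?thesis using \<open>N \<ge> 1\<close> by blast
qed

lemma ceiling_floor_imp_regularized_rate:
  fixes g x y :: 'a and r :: real
  assumes r_nonneg: "r \<ge> 0"
    and witness: "\<And>\<delta>. \<delta> > 0 \<Longrightarrow>
      \<exists>n::nat. n \<ge> 1 \<and> x ^ n * g ^ nat \<lfloor>\<delta> * real n\<rfloor> \<ge> y ^ nat \<lceil>r * real n\<rceil>"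
  shows "is_regularized_rate g x y r"
  unfolding is_regularized_rate_def
proof (intro allI impI, elim conjE)
  fix \<delta> :: real and U :: "real set"
  assume "\<delta> > 0" "open U" "r \<in> U"
  obtain K where K: "\<And>N. N \<ge> K \<Longrightarrow> real (nat \<lceil>r * real N\<rceil>) / real N \<in> U"
    using topological_tendstoD[OF tendsto_nat_ceiling_div[OF r_nonneg] \<open>open U\<close> \<open>r \<in> U\<close>]
    unfolding eventually_sequentially by blast
  obtain n where "n \<ge> 1"
    and n: "x ^ n * g ^ nat \<lfloor>\<delta> * real n\<rfloor> \<ge> y ^ nat \<lceil>r * real n\<rceil>"
    using witness \<open>\<delta> > 0\<close> by blast
  define k where "k = Suc K"
  define N where "N = k * n"
  define m where "m = nat \<lceil>r * real N\<rceil>"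
  define d where "d = k * nat \<lfloor>\<delta> * real n\<rfloor>"
  have "N > 0" using \<open>n \<ge> 1\<close> by (simp add: N_def k_def)
  have "k \<le> N" unfolding N_def using \<open>n \<ge> 1\<close> by (metis mult.right_neutral mult_le_mono2)
  then have "real m / real N \<in> U" using K by (simp add: m_def k_def)
  moreover have "real d \<le> \<delta> * real (max m N)"
  proof -
    have "real k * real (nat \<lfloor>\<delta> * real n\<rfloor>) \<le> real k * (\<delta> * real n)"
      using \<open>\<delta> > 0\<close> by (intro mult_left_mono) auto
    then have "real d \<le> \<delta> * real N" by (simp add: d_def N_def mult.left_commute)
    also have "\<dots> \<le> \<delta> * real (max m N)" using \<open>\<delta> > 0\<close> by (intro mult_left_mono) auto
    finally show ?thesis .
  qed
  moreover have "x ^ N * g ^ d \<ge> y ^ m"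
  proof -
    have "y ^ m \<le> y ^ (k * nat \<lceil>r * real n\<rceil>)"
      using power_increasing_pre[OF nat_ceiling_mult_le]
      by (simp add: m_def N_def)
    also have "\<dots> \<le> x ^ N * g ^ d"
      using power_le_power_scale[OF n] by (simp add: N_def d_def)
    finally show ?thesis .
  qed
  ultimately show "\<exists>m n d::nat. n > 0 \<and> real m / real n \<in> U \<and>
      real d \<le> \<delta> * real (max m n) \<and> x ^ n * g ^ d \<ge> y ^ m"
    using \<open>N > 0\<close> by blast
qed

end

theorem mainTheorem2:
  fixes g x y :: "'a::{comm_monoid_mult, preorder}" and r :: real
  assumes mono: "\<And>a b c :: 'a. a \<ge> b \<Longrightarrow> a * c \<ge> b * c"
    and ge_one: "\<And>a :: 'a. a \<ge> 1"
    and gen: "is_generator g"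
    and r_nonneg: "r \<ge> 0"
  shows "is_regularized_rate g x y r \<longleftrightarrow>
    (\<forall>\<delta>::real. \<delta> > 0 \<longrightarrow>
       (\<exists>n::nat. n \<ge> 1 \<and>
          x ^ n * g ^ nat \<lfloor>\<delta> * real n\<rfloor> \<ge> y ^ nat \<lceil>r * real n\<rceil>))"
proof -
  have "one_le_preordered_monoid TYPE('a)" using mono ge_one by unfold_locales
  then show ?thesis
    using one_le_preordered_monoid.regularized_rate_imp_ceiling_floor[OF _ gen r_nonneg]
      one_le_preordered_monoid.ceiling_floor_imp_regularized_rate[OF _ r_nonneg]
    by blast
qed

end
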